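(* Let $q\ge2$, $G\in\mathbb G^q$ and $S=\Psi(G)$. Let $v$ be a vertex of color $i\in\{1,\dots,q\}$ of $S$, and let $e,e'$ be the color-$i$ edges of $G$ corresponding to two corners of $v$. These two corners split the set of edges incident to $v$ into two (cyclic-interval) sets $V_a$ and $V_b$. Suppose that for one of these sets, say $V_a$, every edge $a\in V_a$, with white endpoint $w_a$, is a bridge of $S$ such that the connected component of $S\setminus a$ containing $w_a$ is a tree. Then there exists a path in $G$ containing both $e$ and $e'$ and no edge of color $0$.
   Context: Fix an integer $q\ge 2$. A $(q+1)$-edge-colored graph (colored graph) is a finite connected graph, multiple edges allowed and no loops, whose edges carry colors in $\{0,1,\dots,q\}$ such that every vertex is incident to exactly one edge of each color. It is rooted if one color-0 edge is distinguished and oriented; it is bipartite if its vertices can be colored black and white so that every edge joins a black and a white vertex, with the convention that the origin of the root edge is black. $\mathbb G^q$ denotes the set of rooted bipartite colored graphs. Constellations: given $G\in\mathbb G^q$, its constellation $S=\Psi(G)$ is obtained as follows: orient every edge from its black to its white endpoint; contract every color-0 edge into a single vertex, called a white vertex of $S$. For each $i\in\{1,\dots,q\}$ the color-$i$ edges now form directed cycles; for each such cycle, passing through white vertices $w_1,\dots,w_p$ in this cyclic order, add a new vertex of color $i$ joined by one color-$i$ edge to each $w_k$, equip the new vertex with the cyclic order $(w_1,\dots,w_p)$ of its incident edges, and delete the original color-$i$ edges of the cycle. The corner of this color-$i$ vertex between its edges to $w_k$ and $w_{k+1}$ (indices mod $p$) is said to correspond to the original color-$i$ edge of $G$ directed from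 (the black endpoint of the color-0 edge) $w_k$ to (the white endpoint of the color-0 edge) $w_{k+1}$. *)

theory Defs
  imports Main
begin

definition g_adj :: "'e set \<Rightarrow> ('e \<Rightarrow> 'a set) \<Rightarrow> ('a \<times> 'a) set" where
  "g_adj Es ends = {(x, y). \<exists>e\<in>Es. ends e = {x, y} \<and> x \<noteq> y}"

definition g_conn :: "'a set \<Rightarrow> 'e set \<Rightarrow> ('e \<Rightarrow> 'a set) \<Rightarrow> 'a \<Rightarrow> 'a \<Rightarrow> bool" where
  "g_conn Vs Es ends x y \<longleftrightarrow> x \<in> Vs \<and> y \<in> Vs \<and> (x, y) \<in> (g_adj Es ends \<inter> (Vs \<times> Vs))\<^sup>*"

definition g_connected :: "'a set \<Rightarrow> 'e set \<Rightarrow> ('e \<Rightarrow> 'a set) \<Rightarrow> bool" where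
  "g_connected Vs Es ends \<longleftrightarrow> Vs \<noteq> {} \<and> (\<forall>x\<in>Vs. \<forall>y\<in>Vs. g_conn Vs Es ends x y)"

definition g_has_cycle :: "'a set \<Rightarrow> 'e set \<Rightarrow> ('e \<Rightarrow> 'a set) \<Rightarrow> bool" where
  "g_has_cycle Vs Es ends \<longleftrightarrow>
     (\<exists>vs es. length vs = length es \<and> length vs \<ge> 2 \<and> distinct vs \<and> distinct es \<and>
        set vs \<subseteq> Vs \<and> set es \<subseteq> Es \<and>
        (\<forall>k < length vs. ends (es ! k) = {vs ! k, vs ! ((k + 1) mod length vs)}))"

definition g_tree :: "'a set \<Rightarrow> 'e set \<Rightarrow> ('e \<Rightarrow> 'a set) \<Rightarrow> bool" where
  "g_tree Vs Es ends \<longleftrightarrow> g_connected Vs Es ends \<and> \<not> g_has_cycle Vs Es ends"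

definition g_bridge :: "'a set \<Rightarrow> 'e set \<Rightarrow> ('e \<Rightarrow> 'a set) \<Rightarrow> 'e \<Rightarrow> bool" where
  "g_bridge Vs Es ends a \<longleftrightarrow> a \<in> Es \<and>
     (\<exists>x y. ends a = {x, y} \<and> x \<noteq> y \<and> \<not> g_conn Vs (Es - {a}) ends x y)"

definition comp_minus_verts :: "'a set \<Rightarrow> 'e set \<Rightarrow> ('e \<Rightarrow> 'a set) \<Rightarrow> 'e \<Rightarrow> 'a \<Rightarrow> 'a set" where
  "comp_minus_verts Vs Es ends a w = {x. g_conn Vs (Es - {a}) ends w x}"

definition comp_minus_edges :: "'a set \<Rightarrow> 'e set \<Rightarrow> ('e \<Rightarrow> 'a set) \<Rightarrow> 'e \<Rightarrow> 'a \<Rightarrow> 'e set" where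
  "comp_minus_edges Vs Es ends a w =
     {e \<in> Es - {a}. ends e \<subseteq> comp_minus_verts Vs Es ends a w}"

text \<open>Encoding: vertex set V; sigma i x is the other endpoint of the unique colour-i
  edge at x (so sigma i is a fixed-point-free involution of V).  Colour-i edges are
  identified with pairs (i, {x, sigma i x}).  The root is a colour-0 edge oriented
  out of the black vertex r.  B is the set of black vertices.\<close>

definition colored_graph :: "nat \<Rightarrow> 'v set \<Rightarrow> (nat \<Rightarrow> 'v \<Rightarrow> 'v) \<Rightarrow> bool" where
  "colored_graph q V \<sigma> \<longleftrightarrow> finite V \<and> V \<noteq> {} \<and>
     (\<forall>i\<le>q. \<forall>x\<in>V. \<sigma> i x \<in> V \<and> \<sigma> i x \<noteq> x \<and> \<sigma> i (\<sigma> i x) = x) \<and>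
     (\<forall>x\<in>V. \<forall>y\<in>V. (x, y) \<in> {(u, \<sigma> i u) | u i. u \<in> V \<and> i \<le> q}\<^sup>*)"

definition rooted_bipartite_cg :: "nat \<Rightarrow> 'v set \<Rightarrow> (nat \<Rightarrow> 'v \<Rightarrow> 'v) \<Rightarrow> 'v \<Rightarrow> 'v set \<Rightarrow> bool" where
  "rooted_bipartite_cg q V \<sigma> r B \<longleftrightarrow> colored_graph q V \<sigma> \<and> r \<in> V \<and> r \<in> B \<and> B \<subseteq> V \<and>
     (\<forall>i\<le>q. \<forall>x\<in>V. x \<in> B \<longleftrightarrow> \<sigma> i x \<notin> B)"

text \<open>White vertices of S are the colour-0 edges of G, identified with their black
  endpoints.  The colour-i edge of G from black b goes to white sigma i b, lying on the
  colour-0 edge with black end sigma 0 (sigma i b); so after contraction the colour-i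
  edges form the permutation pi_i = sigma 0 o sigma i of B, whose cycles are the
  colour-i vertices of S.  The edge (i, b) of S joins White b and the colour-i vertex
  containing b; the corner of that vertex between its edges to b and pi_i b corresponds
  to the colour-i edge of G from b to sigma i b.\<close>

datatype 'v svert = White 'v | ColV nat "'v set"

definition cperm :: "(nat \<Rightarrow> 'v \<Rightarrow> 'v) \<Rightarrow> nat \<Rightarrow> 'v \<Rightarrow> 'v" where
  "cperm \<sigma> i = \<sigma> 0 \<circ> \<sigma> i"

definition orbit_of :: "('v \<Rightarrow> 'v) \<Rightarrow> 'v \<Rightarrow> 'v set" where
  "orbit_of f x = {(f ^^ k) x | k. True}"

definition const_verts :: "nat \<Rightarrow> 'v set \<Rightarrow> (nat \<Rightarrow> 'v \<Rightarrow> 'v) \<Rightarrow> 'v svert set" where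
  "const_verts q B \<sigma> = White ` B \<union> {ColV i (orbit_of (cperm \<sigma> i) b) | i b. 1 \<le> i \<and> i \<le> q \<and> b \<in> B}"

definition const_edges :: "nat \<Rightarrow> 'v set \<Rightarrow> (nat \<times> 'v) set" where
  "const_edges q B = {(i, b). 1 \<le> i \<and> i \<le> q \<and> b \<in> B}"

definition const_ends :: "(nat \<Rightarrow> 'v \<Rightarrow> 'v) \<Rightarrow> nat \<times> 'v \<Rightarrow> 'v svert set" where
  "const_ends \<sigma> a = {White (snd a), ColV (fst a) (orbit_of (cperm \<sigma> (fst a)) (snd a))}"

text \<open>Edges of a colour-i vertex lying strictly after the corner at x up to (and
  including the edge to) y, in the cyclic order of the cycle of f: f x, ..., y.\<close>
definition cyc_interval :: "('v \<Rightarrow> 'v) \<Rightarrow> 'v \<Rightarrow> 'v \<Rightarrow> 'v set" where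
  "cyc_interval f x y = {(f ^^ k) x | k. 1 \<le> k \<and> k \<le> (LEAST m. 0 < m \<and> (f ^^ m) x = y)}"

definition side_tree_bridges :: "nat \<Rightarrow> 'v set \<Rightarrow> (nat \<Rightarrow> 'v \<Rightarrow> 'v) \<Rightarrow> (nat \<times> 'v) set \<Rightarrow> bool" where
  "side_tree_bridges q B \<sigma> Va \<longleftrightarrow>
     (\<forall>a\<in>Va. g_bridge (const_verts q B \<sigma>) (const_edges q B) (const_ends \<sigma>) a \<and>
        g_tree (comp_minus_verts (const_verts q B \<sigma>) (const_edges q B) (const_ends \<sigma>) a (White (snd a)))
               (comp_minus_edges (const_verts q B \<sigma>) (const_edges q B) (const_ends \<sigma>) a (White (snd a)))
               (const_ends \<sigma>))"

definition path_no0 :: "nat \<Rightarrow> 'v set \<Rightarrow> (nat \<Rightarrow> 'v \<Rightarrow> 'v) \<Rightarrow> 'v list \<Rightarrow> nat list \<Rightarrow> bool" where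
  "path_no0 q V \<sigma> vs cs \<longleftrightarrow> length vs = length cs + 1 \<and> distinct vs \<and> set vs \<subseteq> V \<and>
     (\<forall>k < length cs. 1 \<le> cs ! k \<and> cs ! k \<le> q \<and> vs ! (k + 1) = \<sigma> (cs ! k) (vs ! k))"

definition path_edges :: "'v list \<Rightarrow> nat list \<Rightarrow> (nat \<times> 'v set) set" where
  "path_edges vs cs = {(cs ! k, {vs ! k, vs ! (k + 1)}) | k. k < length cs}"

end

theory Submission
  imports Defs
begin

text \<open>Call a black vertex \<open>b\<close> bypassed when the two ends of its colour-0 edge are joined by
  a walk avoiding colour 0.  Walking once around the colour-\<open>c\<close> cycle of \<open>b\<close>, alternately
  along colour-\<open>c\<close> edges of \<open>G\<close> and along the bypasses of the other vertices of the cycle,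
  shows that \<open>b\<close> is bypassed as soon as all other vertices of its cycle are.  Hence a vertex
  that is not bypassed has, on each of its cycles, another vertex that is not bypassed, and
  alternating between two colours (this uses \<open>q \<ge> 2\<close>) yields an infinite non-backtracking
  walk in \<open>S\<close>.  Started at the white end of a bridge \<open>a\<close> but not along \<open>a\<close>, this walk stays
  in the component of \<open>S - a\<close> up to its first repeated vertex and closes a cycle there; so
  when that component is a tree, the white end of \<open>a\<close> is bypassed.  Thus every vertex of
  \<open>V\<^sub>a\<close> is bypassed, and chaining these bypasses with the colour-\<open>i\<close> edges of \<open>G\<close> between
  consecutive corners joins \<open>e\<close> to \<open>e'\<close> avoiding colour 0.  A shortest such connection,
  extended by \<open>e\<close> and \<open>e'\<close>, is the required path.\<close>

section \<open>Iterated maps and their orbits\<close>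

lemma first_repetition:
  fixes x :: "nat \<Rightarrow> 'a"
  assumes "finite (range x)"
  obtains m j where "m < j" "x m = x j" "inj_on x {..<j}"
proof -
  define rep where "rep j \<longleftrightarrow> (\<exists>m<j. x m = x j)" for j
  have "\<not> inj x"
    using assms finite_imageD infinite_UNIV_nat by blast
  then have "\<exists>j. rep j"
    unfolding inj_def rep_def by (metis linorder_neqE_nat)
  then obtain j where "rep j" and earlier: "\<And>k. k < j \<Longrightarrow> \<not> rep k"
    by (metis exists_least_iff)
  moreover have "inj_on x {..<j}"
    by (rule inj_onI) (metis earlier lessThan_iff linorder_neqE_nat rep_def)
  ultimately show thesis
    using that rep_def by blast
qed

lemma funpow_returns:
  assumes "finite A" "f ` A \<subseteq> A" "inj_on f A" "x \<in> A"
  obtains n where "0 < n" "(f ^^ n) x = x"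
proof -
  have in_A: "(f ^^ k) x \<in> A" for k
    by (induction k) (use assms in auto)
  then have "finite (range (\<lambda>k. (f ^^ k) x))"
    using assms(1) by (meson finite_subset image_subsetI)
  then obtain m j where mj: "m < j" "(f ^^ m) x = (f ^^ j) x"
    and inj: "inj_on (\<lambda>k. (f ^^ k) x) {..<j}"
    by (rule first_repetition)
  have "m = 0"
  proof (rule ccontr)
    assume "m \<noteq> 0"
    then have "f ((f ^^ (m - 1)) x) = f ((f ^^ (j - 1)) x)"
      using mj by (metis Suc_pred' comp_apply funpow.simps(2) gr0I less_trans)
    then have "(f ^^ (m - 1)) x = (f ^^ (j - 1)) x"
      using assms(3) in_A by (meson inj_onD)
    then show False
      using inj mj \<open>m \<noteq> 0\<close> by (auto dest: inj_onD)
  qed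
  then show thesis
    using that mj by simp
qed

lemma orbit_of_funpow: "(f ^^ k) x \<in> orbit_of f x"
  unfolding orbit_of_def by blast

lemma orbit_of_trans: "y \<in> orbit_of f x \<Longrightarrow> z \<in> orbit_of f y \<Longrightarrow> z \<in> orbit_of f x"
proof -
  assume "y \<in> orbit_of f x" "z \<in> orbit_of f y"
  then obtain j k where "y = (f ^^ j) x" "z = (f ^^ k) y"
    unfolding orbit_of_def by blast
  then have "z = (f ^^ (k + j)) x"
    by (simp add: funpow_add)
  then show ?thesis
    by (simp add: orbit_of_funpow)
qed

lemma orbit_of_sym:
  assumes "0 < p" "(f ^^ p) x = x" "y \<in> orbit_of f x"
  shows "x \<in> orbit_of f y"
proof -
  obtain j where y: "y = (f ^^ j) x"
    using assms(3) unfolding orbit_of_def by blast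
  have "((f ^^ p) ^^ j) x = x"
    by (induction j) (simp_all add: assms(2))
  then have "(f ^^ (p * j - j + j)) x = x"
    using assms(1) by (simp add: funpow_mult)
  then have "(f ^^ (p * j - j)) y = x"
    by (simp add: y funpow_add)
  then show ?thesis
    by (metis orbit_of_funpow)
qed

lemma orbit_of_eq:
  assumes "0 < p" "(f ^^ p) x = x" "y \<in> orbit_of f x"
  shows "orbit_of f y = orbit_of f x"
proof
  show "orbit_of f y \<subseteq> orbit_of f x"
    using assms(3) orbit_of_trans by fast
  show "orbit_of f x \<subseteq> orbit_of f y"
    using orbit_of_sym[OF assms] orbit_of_trans by fast
qed

section \<open>Walks and cycles in graphs\<close>

lemma g_conn_sym: "g_conn Vs Es ends x y \<Longrightarrow> g_conn Vs Es ends y x"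
proof -
  let ?R = "g_adj Es ends \<inter> Vs \<times> Vs"
  assume xy: "g_conn Vs Es ends x y"
  have "?R\<inverse> = ?R"
    unfolding g_adj_def by (auto simp: insert_commute)
  moreover have "(y, x) \<in> (?R\<inverse>)\<^sup>*"
    using xy unfolding g_conn_def by (simp add: rtrancl_converse)
  ultimately show ?thesis
    using xy unfolding g_conn_def by simp
qed

lemma g_conn_step:
  assumes "g_conn Vs Es ends x y" "f \<in> Es" "ends f = {y, z}" "y \<noteq> z" "z \<in> Vs"
  shows "g_conn Vs Es ends x z"
proof -
  have "(y, z) \<in> g_adj Es ends \<inter> Vs \<times> Vs"
    using assms unfolding g_adj_def g_conn_def by blast
  then show ?thesis
    using assms(1,5) unfolding g_conn_def by (meson rtrancl.rtrancl_into_rtrancl)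
qed

lemma walk_edges_distinct:
  assumes ends: "\<And>k. ends (e k) = {x k, x (Suc k)}"
    and no_loop: "\<And>k. x k \<noteq> x (Suc k)" and no_backtrack: "\<And>k. e k \<noteq> e (Suc k)"
    and closed: "m < j" "x m = x j" and inj: "inj_on x {..<j}"
    and st: "m \<le> s" "s < t" "t < j"
  shows "e s \<noteq> e t"
proof
  assume est: "e s = e t"
  have index_eq: "a = b" if "x a = x b" "a < j" "b < j" for a b
    using inj that by (auto dest: inj_onD)
  have ends_eq: "{x s, x (Suc s)} = {x t, x (Suc t)}"
    using ends est by metis
  have "x s \<noteq> x t"
    using index_eq st by fastforce
  then have xs: "x s = x (Suc t)"
    using ends_eq by blast
  show False
  proof (cases "Suc t < j")
    case True
    then show ?thesis
      using index_eq[OF xs] st by simp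
  next
    case False
    then have "Suc t = j"
      using st by simp
    then have "s = m"
      using xs closed index_eq st by (metis less_trans)
    then have "x (Suc s) \<noteq> x (Suc t)"
      using no_loop \<open>Suc t = j\<close> closed by metis
    then have "x (Suc s) = x t"
      using ends_eq by blast
    then have "Suc s = t"
      using index_eq st by (metis less_trans_Suc)
    then show False
      using no_backtrack est by metis
  qed
qed

lemma walk_has_cycle:
  assumes ends: "\<And>k. ends (e k) = {x k, x (Suc k)}"
    and no_loop: "\<And>k. x k \<noteq> x (Suc k)" and no_backtrack: "\<And>k. e k \<noteq> e (Suc k)"
    and closed: "m < j" "x m = x j" and inj: "inj_on x {..<j}"
    and in_Vs: "\<And>k. k \<le> j \<Longrightarrow> x k \<in> Vs" and in_Es: "\<And>k. k < j \<Longrightarrow> e k \<in> Es"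
  shows "g_has_cycle Vs Es ends"
proof -
  define vs where "vs = map x [m..<j]"
  define es where "es = map e [m..<j]"
  have len: "length vs = j - m" "length es = j - m"
    unfolding vs_def es_def by simp_all
  have "j \<noteq> Suc m"
    using closed no_loop by metis
  then have "j - m \<ge> 2"
    using closed by linarith
  moreover have "distinct vs"
    unfolding vs_def using inj_on_subset[OF inj] by (simp add: distinct_map subset_eq)
  moreover have "inj_on e {m..<j}"
  proof (rule inj_onI, rule ccontr)
    fix s t assume "s \<in> {m..<j}" "t \<in> {m..<j}" "e s = e t" "s \<noteq> t"
    then show False
      using walk_edges_distinct[OF ends no_loop no_backtrack closed inj]
      by (metis atLeastLessThan_iff linorder_neq_iff)
  qed
  then have "distinct es"
    unfolding es_def by (simp add: distinct_map)
  moreover have "set vs \<subseteq> Vs" "set es \<subseteq> Es"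
    unfolding vs_def es_def using in_Vs in_Es by auto
  moreover have "ends (es ! k) = {vs ! k, vs ! ((k + 1) mod length vs)}" if "k < length vs" for k
  proof -
    have "vs ! ((k + 1) mod length vs) = x (Suc (m + k))"
    proof (cases "Suc k < j - m")
      case True
      then show ?thesis
        using len by (simp add: vs_def)
    next
      case False
      then have "j = Suc (m + k)"
        using that len by simp
      then show ?thesis
        using closed by (simp add: vs_def del: upt_Suc)
    qed
    then show ?thesis
      using that len ends by (simp add: vs_def es_def)
  qed
  ultimately show ?thesis
    unfolding g_has_cycle_def using len by metis
qed

lemma nonbacktracking_walk_component_cycle:
  assumes fin: "finite Vs"
    and ends: "\<And>k. ends (e k) = {x k, x (Suc k)}"
    and no_loop: "\<And>k. x k \<noteq> x (Suc k)" and no_backtrack: "\<And>k. e k \<noteq> e (Suc k)"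
    and in_Vs: "\<And>k. x k \<in> Vs" and in_Es: "\<And>k. e k \<in> Es"
    and a: "ends a = {x 0, v}" "v \<notin> comp_minus_verts Vs Es ends a (x 0)"
    and start: "e 0 \<noteq> a"
  shows "g_has_cycle (comp_minus_verts Vs Es ends a (x 0)) (comp_minus_edges Vs Es ends a (x 0)) ends"
proof -
  let ?T = "comp_minus_verts Vs Es ends a (x 0)"
  have "finite (range x)"
    using fin in_Vs by (meson finite_subset image_subsetI)
  then obtain m j where closed: "m < j" "x m = x j" and inj: "inj_on x {..<j}"
    by (rule first_repetition)
  have avoids_a: "e k \<noteq> a" if "k < j" "x k \<in> ?T" for k
  proof
    assume "e k = a"
    then have "x k \<in> {x 0, v}"
      using ends a(1) by (metis insertI1)
    then have "x k = x 0"
      using that(2) a(2) by blast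
    then have "k = 0"
      using inj that(1) closed(1) by (auto dest: inj_onD)
    then show False
      using start \<open>e k = a\<close> by simp
  qed
  have in_T: "x k \<in> ?T" if "k \<le> j" for k
    using that
  proof (induction k)
    case 0
    show ?case
      using in_Vs unfolding comp_minus_verts_def g_conn_def by simp
  next
    case (Suc k)
    then have "x k \<in> ?T" "e k \<noteq> a"
      using avoids_a by auto
    then show ?case
      using g_conn_step[of Vs "Es - {a}" ends "x 0" "x k" "e k" "x (Suc k)"] in_Es ends no_loop in_Vs
      unfolding comp_minus_verts_def by blast
  qed
  have in_TE: "e k \<in> comp_minus_edges Vs Es ends a (x 0)" if "k < j" for k
    using avoids_a in_T in_Es ends that unfolding comp_minus_edges_def by auto
  show ?thesis
    by (rule walk_has_cycle[OF ends no_loop no_backtrack closed inj in_T in_TE])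
qed

section \<open>Paths avoiding colour 0\<close>

lemma last_eq_nth: "length xs = n + 1 \<Longrightarrow> last xs = xs ! n"
  by (cases xs rule: rev_cases) (auto simp: nth_append)

lemma path_no0_length: "path_no0 q V \<sigma> vs cs \<Longrightarrow> length vs = length cs + 1"
  unfolding path_no0_def by simp

lemma path_no0_singleton: "x \<in> V \<Longrightarrow> path_no0 q V \<sigma> [x] []"
  unfolding path_no0_def by simp

lemma path_no0_snoc:
  assumes p: "path_no0 q V \<sigma> vs cs" and y: "y \<notin> set vs" "y \<in> V"
    and c: "1 \<le> c" "c \<le> q" "y = \<sigma> c (last vs)"
  shows "path_no0 q V \<sigma> (vs @ [y]) (cs @ [c])"
proof -
  have len: "length vs = length cs + 1"
    using p by (rule path_no0_length)
  then have "last vs = vs ! length cs"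
    by (rule last_eq_nth)
  then show ?thesis
    using p y c len unfolding path_no0_def by (auto simp: nth_append less_Suc_eq)
qed

lemma path_no0_Cons:
  assumes p: "path_no0 q V \<sigma> vs cs" and x: "x \<notin> set vs" "x \<in> V"
    and c: "1 \<le> c" "c \<le> q" "hd vs = \<sigma> c x"
  shows "path_no0 q V \<sigma> (x # vs) (c # cs)"
proof -
  have "vs \<noteq> []"
    using path_no0_length[OF p] by auto
  then have "vs ! 0 = \<sigma> c x"
    using c by (simp add: hd_conv_nth)
  then show ?thesis
    using p x c unfolding path_no0_def by (auto simp: nth_Cons less_Suc_eq_0_disj)
qed

lemma path_no0_take:
  assumes "path_no0 q V \<sigma> vs cs" "k < length vs"
  shows "path_no0 q V \<sigma> (take (Suc k) vs) (take k cs)"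
  using assms unfolding path_no0_def by (auto dest: in_set_takeD)

lemma path_no0_drop:
  assumes "path_no0 q V \<sigma> vs cs" "k < length vs"
  shows "path_no0 q V \<sigma> (drop k vs) (drop k cs)"
  using assms unfolding path_no0_def by (auto dest: in_set_dropD simp: add.commute add.left_commute)

lemma path_edges_conv_image: "path_edges vs cs = (\<lambda>k. (cs ! k, {vs ! k, vs ! (k + 1)})) ` {..<length cs}"
  unfolding path_edges_def by auto

lemma path_edges_snoc:
  assumes "length vs = length cs + 1"
  shows "path_edges (vs @ [y]) (cs @ [c]) = insert (c, {last vs, y}) (path_edges vs cs)"
proof -
  have "last vs = vs ! length cs"
    using assms by (rule last_eq_nth)
  moreover have "(\<lambda>k. ((cs @ [c]) ! k, {(vs @ [y]) ! k, (vs @ [y]) ! (k + 1)})) ` {..<length cs}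
      = path_edges vs cs"
    unfolding path_edges_conv_image using assms by (auto simp: nth_append)
  ultimately show ?thesis
    using assms by (simp add: path_edges_conv_image lessThan_Suc nth_append)
qed

lemma path_edges_Cons:
  assumes "vs \<noteq> []"
  shows "path_edges (x # vs) (c # cs) = insert (c, {x, hd vs}) (path_edges vs cs)"
  using assms by (simp add: path_edges_conv_image lessThan_Suc_eq_insert_0 image_image hd_conv_nth)

lemma path_no0_extend:
  assumes p: "path_no0 q V \<sigma> vs cs"
    and xy: "x \<notin> set vs" "y \<notin> set vs" "x \<noteq> y" "x \<in> V" "y \<in> V"
    and c: "1 \<le> c" "c \<le> q" "hd vs = \<sigma> c x" "y = \<sigma> c (last vs)"
  shows "path_no0 q V \<sigma> (x # vs @ [y]) (c # cs @ [c])"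
    and "path_edges (x # vs @ [y]) (c # cs @ [c])
      = insert (c, {x, hd vs}) (insert (c, {last vs, y}) (path_edges vs cs))"
proof -
  have len: "length vs = length cs + 1"
    using p by (rule path_no0_length)
  then have "vs \<noteq> []"
    by auto
  moreover have "path_no0 q V \<sigma> (vs @ [y]) (cs @ [c])"
    by (rule path_no0_snoc[OF p xy(2,5) c(1,2,4)])
  ultimately show "path_no0 q V \<sigma> (x # vs @ [y]) (c # cs @ [c])"
    using path_no0_Cons[OF _ _ xy(4) c(1,2)] xy(1,3) c(3) by simp
  show "path_edges (x # vs @ [y]) (c # cs @ [c])
      = insert (c, {x, hd vs}) (insert (c, {last vs, y}) (path_edges vs cs))"
    using path_edges_Cons[of "vs @ [y]" x c "cs @ [c]"] path_edges_snoc[OF len] \<open>vs \<noteq> []\<close>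
    by simp
qed

lemma path_no0_shortest_between:
  assumes "path_no0 q V \<sigma> vs cs" "hd vs \<in> X" "last vs \<in> Y"
  obtains vs' cs' where "path_no0 q V \<sigma> vs' cs'" "hd vs' \<in> X" "last vs' \<in> Y"
    "set (tl vs') \<inter> X = {}" "set (butlast vs') \<inter> Y = {}"
proof -
  define between where "between n \<longleftrightarrow>
      (\<exists>vs cs. path_no0 q V \<sigma> vs cs \<and> hd vs \<in> X \<and> last vs \<in> Y \<and> length vs = n)" for n
  have "between (length vs)"
    using assms unfolding between_def by blast
  then obtain n where "between n" and shorter: "\<And>m. m < n \<Longrightarrow> \<not> between m"
    by (metis exists_least_iff)
  then obtain vs' cs' where p: "path_no0 q V \<sigma> vs' cs'" "hd vs' \<in> X" "last vs' \<in> Y"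
    and len: "length vs' = n"
    unfolding between_def by blast
  have ne: "vs' \<noteq> []"
    using path_no0_length[OF p(1)] by auto
  have "vs' ! k \<notin> X" if "0 < k" "k < n" for k
  proof
    assume "vs' ! k \<in> X"
    then have "between (length (drop k vs'))"
      unfolding between_def using p path_no0_drop[OF p(1)] that len
      by (metis hd_drop_conv_nth last_drop)
    then show False
      using shorter that len by simp
  qed
  then have "set (tl vs') \<inter> X = {}"
    using len by (auto simp: in_set_conv_nth nth_tl)
  moreover have "vs' ! k \<notin> Y" if "Suc k < n" for k
  proof
    assume "vs' ! k \<in> Y"
    moreover have "last (take (Suc k) vs') = vs' ! k"
      using that len by (simp add: take_Suc_conv_app_nth)
    ultimately have "between (length (take (Suc k) vs'))"
      unfolding between_def using p path_no0_take[OF p(1)] that len ne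
      by (metis Suc_lessD hd_take zero_less_Suc)
    then show False
      using shorter that len by simp
  qed
  then have "set (butlast vs') \<inter> Y = {}"
    using len by (auto simp: in_set_conv_nth nth_butlast)
  ultimately show thesis
    using that p by blast
qed

section \<open>Bypassed vertices of a rooted bipartite colored graph\<close>

locale rooted_bipartite_colored_graph =
  fixes q :: nat and V :: "'v set" and \<sigma> :: "nat \<Rightarrow> 'v \<Rightarrow> 'v" and r :: 'v and B :: "'v set"
  assumes rooted_bipartite: "rooted_bipartite_cg q V \<sigma> r B"
begin

lemma finite_V: "finite V"
  using rooted_bipartite unfolding rooted_bipartite_cg_def colored_graph_def by blast

lemma B_subset_V: "B \<subseteq> V"
  using rooted_bipartite unfolding rooted_bipartite_cg_def by blast

lemma finite_B: "finite B"
  using finite_V B_subset_V finite_subset by blast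

lemma sigma_in_V: "c \<le> q \<Longrightarrow> x \<in> V \<Longrightarrow> \<sigma> c x \<in> V"
  using rooted_bipartite unfolding rooted_bipartite_cg_def colored_graph_def by blast

lemma sigma_sigma: "c \<le> q \<Longrightarrow> x \<in> V \<Longrightarrow> \<sigma> c (\<sigma> c x) = x"
  using rooted_bipartite unfolding rooted_bipartite_cg_def colored_graph_def by blast

lemma sigma_neq: "c \<le> q \<Longrightarrow> x \<in> V \<Longrightarrow> \<sigma> c x \<noteq> x"
  using rooted_bipartite unfolding rooted_bipartite_cg_def colored_graph_def by blast

lemma sigma_in_B_iff: "c \<le> q \<Longrightarrow> x \<in> V \<Longrightarrow> \<sigma> c x \<in> B \<longleftrightarrow> x \<notin> B"
  using rooted_bipartite unfolding rooted_bipartite_cg_def by blast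

lemma cperm_in_B: "c \<le> q \<Longrightarrow> b \<in> B \<Longrightarrow> cperm \<sigma> c b \<in> B"
  unfolding cperm_def using sigma_in_B_iff sigma_in_V B_subset_V by (metis comp_apply in_mono le0)

lemma sigma0_cperm: "c \<le> q \<Longrightarrow> b \<in> B \<Longrightarrow> \<sigma> 0 (cperm \<sigma> c b) = \<sigma> c b"
  unfolding cperm_def using sigma_sigma sigma_in_V B_subset_V by auto

lemma inj_on_cperm: "c \<le> q \<Longrightarrow> inj_on (cperm \<sigma> c) B"
proof (rule inj_onI)
  fix x y assume "c \<le> q" "x \<in> B" "y \<in> B" "cperm \<sigma> c x = cperm \<sigma> c y"
  then have "\<sigma> c x = \<sigma> c y"
    using sigma0_cperm by metis
  then show "x = y"
    using sigma_sigma B_subset_V \<open>c \<le> q\<close> \<open>x \<in> B\<close> \<open>y \<in> B\<close> by (metis subsetD)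
qed

lemma funpow_cperm_in_B: "c \<le> q \<Longrightarrow> b \<in> B \<Longrightarrow> (cperm \<sigma> c ^^ k) b \<in> B"
  by (induction k) (auto simp: cperm_in_B)

lemma cperm_period:
  assumes "c \<le> q" "b \<in> B"
  obtains p where "0 < p" "(cperm \<sigma> c ^^ p) b = b"
proof -
  have "cperm \<sigma> c ` B \<subseteq> B"
    using cperm_in_B assms(1) by blast
  then show thesis
    using funpow_returns[OF finite_B _ inj_on_cperm[OF assms(1)] assms(2)] that by blast
qed

lemma orbit_of_cperm_subset_B: "c \<le> q \<Longrightarrow> b \<in> B \<Longrightarrow> orbit_of (cperm \<sigma> c) b \<subseteq> B"
  unfolding orbit_of_def using funpow_cperm_in_B by blast

lemma orbit_of_cperm_sym:
  assumes "c \<le> q" "b \<in> B" "y \<in> orbit_of (cperm \<sigma> c) b"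
  shows "b \<in> orbit_of (cperm \<sigma> c) y"
proof -
  obtain p where "0 < p" "(cperm \<sigma> c ^^ p) b = b"
    by (rule cperm_period[OF assms(1,2)])
  then show ?thesis
    by (rule orbit_of_sym[OF _ _ assms(3)])
qed

lemma orbit_of_cperm_eq:
  assumes "c \<le> q" "b \<in> B" "y \<in> orbit_of (cperm \<sigma> c) b"
  shows "orbit_of (cperm \<sigma> c) y = orbit_of (cperm \<sigma> c) b"
proof -
  obtain p where "0 < p" "(cperm \<sigma> c ^^ p) b = b"
    by (rule cperm_period[OF assms(1,2)])
  then show ?thesis
    by (rule orbit_of_eq[OF _ _ assms(3)])
qed

definition adj_no0 :: "('v \<times> 'v) set" where
  "adj_no0 = {(u, \<sigma> c u) | u c. u \<in> V \<and> 1 \<le> c \<and> c \<le> q}"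

definition bypassed :: "'v \<Rightarrow> bool" where
  "bypassed u \<longleftrightarrow> (u, \<sigma> 0 u) \<in> adj_no0\<^sup>*"

lemma adj_no0I: "u \<in> V \<Longrightarrow> 1 \<le> c \<Longrightarrow> c \<le> q \<Longrightarrow> (u, \<sigma> c u) \<in> adj_no0"
  unfolding adj_no0_def by blast

lemma adj_no0_sym:
  assumes "(x, y) \<in> adj_no0"
  shows "(y, x) \<in> adj_no0"
proof -
  obtain c where c: "x \<in> V" "1 \<le> c" "c \<le> q" "y = \<sigma> c x"
    using assms unfolding adj_no0_def by blast
  then have "y \<in> V" "x = \<sigma> c y"
    using sigma_in_V sigma_sigma by auto
  then show ?thesis
    using adj_no0I c(2,3) by metis
qed

lemma adj_no0_rtrancl_sym: "(x, y) \<in> adj_no0\<^sup>* \<Longrightarrow> (y, x) \<in> adj_no0\<^sup>*"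
  by (induction rule: rtrancl_induct) (auto intro: converse_rtrancl_into_rtrancl adj_no0_sym)

lemma adj_no0_cperm: "b \<in> B \<Longrightarrow> 1 \<le> c \<Longrightarrow> c \<le> q \<Longrightarrow> (b, \<sigma> 0 (cperm \<sigma> c b)) \<in> adj_no0"
  using adj_no0I[of b c] sigma0_cperm[of c b] B_subset_V by auto

lemma cycle_segment_connected:
  assumes "u \<in> B" "1 \<le> c" "c \<le> q"
    and "\<And>l. 1 \<le> l \<Longrightarrow> l \<le> k \<Longrightarrow> bypassed ((cperm \<sigma> c ^^ l) u)"
  shows "(\<sigma> c u, (cperm \<sigma> c ^^ k) u) \<in> adj_no0\<^sup>*"
  using assms(4)
proof (induction k)
  case 0
  have "(u, \<sigma> c u) \<in> adj_no0"
    using adj_no0I assms B_subset_V by auto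
  then show ?case
    by (simp add: adj_no0_sym r_into_rtrancl)
next
  case (Suc k)
  let ?u = "(cperm \<sigma> c ^^ k) u"
  have "(\<sigma> c u, ?u) \<in> adj_no0\<^sup>*"
    using Suc by simp
  moreover have "(?u, \<sigma> 0 (cperm \<sigma> c ?u)) \<in> adj_no0"
    by (rule adj_no0_cperm[OF funpow_cperm_in_B[OF assms(3,1)] assms(2,3)])
  moreover have "bypassed (cperm \<sigma> c ?u)"
    using Suc.prems[of "Suc k"] by simp
  then have "(\<sigma> 0 (cperm \<sigma> c ?u), cperm \<sigma> c ?u) \<in> adj_no0\<^sup>*"
    unfolding bypassed_def by (rule adj_no0_rtrancl_sym)
  ultimately have "(\<sigma> c u, cperm \<sigma> c ?u) \<in> adj_no0\<^sup>*"
    by (meson rtrancl_into_rtrancl rtrancl_trans)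
  then show ?case
    by simp
qed

lemma bypassed_if_rest_of_cycle_bypassed:
  assumes "b \<in> B" "1 \<le> c" "c \<le> q"
    and rest: "\<And>u. u \<in> orbit_of (cperm \<sigma> c) b \<Longrightarrow> u \<noteq> b \<Longrightarrow> bypassed u"
  shows "bypassed b"
proof -
  obtain p where p: "0 < p" "(cperm \<sigma> c ^^ p) b = b"
    and minimal: "\<And>l. l < p \<Longrightarrow> \<not> (0 < l \<and> (cperm \<sigma> c ^^ l) b = b)"
    using cperm_period[OF assms(3,1)] exists_least_iff[of "\<lambda>p. 0 < p \<and> (cperm \<sigma> c ^^ p) b = b"]
    by metis
  let ?u = "(cperm \<sigma> c ^^ (p - 1)) b"
  have "(b, \<sigma> c b) \<in> adj_no0"
    using adj_no0I assms B_subset_V by auto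
  moreover have "(\<sigma> c b, ?u) \<in> adj_no0\<^sup>*"
  proof (rule cycle_segment_connected[OF assms(1-3)])
    fix l assume "1 \<le> l" "l \<le> p - 1"
    then have "(cperm \<sigma> c ^^ l) b \<noteq> b"
      using minimal[of l] p(1) by auto
    then show "bypassed ((cperm \<sigma> c ^^ l) b)"
      by (rule rest[OF orbit_of_funpow])
  qed
  ultimately have "(b, ?u) \<in> adj_no0\<^sup>*"
    by (rule converse_rtrancl_into_rtrancl)
  moreover have "(?u, \<sigma> 0 (cperm \<sigma> c ?u)) \<in> adj_no0"
    by (rule adj_no0_cperm[OF funpow_cperm_in_B[OF assms(3,1)] assms(2,3)])
  moreover have "cperm \<sigma> c ?u = (cperm \<sigma> c ^^ Suc (p - 1)) b"
    by simp
  then have "cperm \<sigma> c ?u = b"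
    using p by simp
  ultimately have "(b, \<sigma> 0 b) \<in> adj_no0\<^sup>*"
    by simp
  then show ?thesis
    unfolding bypassed_def .
qed

lemma exists_not_bypassed_in_orbit:
  assumes "b \<in> B" "1 \<le> c" "c \<le> q" "\<not> bypassed b"
  obtains u where "u \<in> orbit_of (cperm \<sigma> c) b" "u \<noteq> b" "\<not> bypassed u" "u \<in> B"
proof -
  have "\<exists>u. u \<in> orbit_of (cperm \<sigma> c) b \<and> u \<noteq> b \<and> \<not> bypassed u"
    using bypassed_if_rest_of_cycle_bypassed[OF assms(1-3)] assms(4) by blast
  then show thesis
    using that orbit_of_cperm_subset_B assms by blast
qed

section \<open>Bridges of the constellation whose side is a tree\<close>

lemma finite_const_verts: "finite (const_verts q B \<sigma>)"
proof -
  have "{ColV c (orbit_of (cperm \<sigma> c) b) | c b. 1 \<le> c \<and> c \<le> q \<and> b \<in> B}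
      \<subseteq> (\<lambda>(c, b). ColV c (orbit_of (cperm \<sigma> c) b)) ` ({1..q} \<times> B)"
    by auto
  then show ?thesis
    unfolding const_verts_def using finite_B by (simp add: finite_subset)
qed

lemma not_bypassed_sequence:
  assumes "w \<in> B" "\<not> bypassed w" and col: "\<And>k. 1 \<le> col k" "\<And>k. col k \<le> q"
  obtains u where "u 0 = w" "\<And>k. u k \<in> B" "\<And>k. \<not> bypassed (u k)"
    "\<And>k. u (Suc k) \<in> orbit_of (cperm \<sigma> (col k)) (u k)" "\<And>k. u (Suc k) \<noteq> u k"
proof -
  define next_bad where "next_bad b c =
      (SOME u. u \<in> orbit_of (cperm \<sigma> c) b \<and> u \<noteq> b \<and> \<not> bypassed u \<and> u \<in> B)" for b c
  have next_bad: "next_bad b c \<in> orbit_of (cperm \<sigma> c) b \<and> next_bad b c \<noteq> b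
      \<and> \<not> bypassed (next_bad b c) \<and> next_bad b c \<in> B"
    if bad: "b \<in> B" "\<not> bypassed b" "1 \<le> c" "c \<le> q" for b c
  proof -
    obtain u where "u \<in> orbit_of (cperm \<sigma> c) b" "u \<noteq> b" "\<not> bypassed u" "u \<in> B"
      using exists_not_bypassed_in_orbit[OF bad(1,3,4,2)] .
    then have "\<exists>u. u \<in> orbit_of (cperm \<sigma> c) b \<and> u \<noteq> b \<and> \<not> bypassed u \<and> u \<in> B"
      by blast
    then show ?thesis
      unfolding next_bad_def by (rule someI_ex)
  qed
  define u where "u = rec_nat w (\<lambda>k b. next_bad b (col k))"
  have u_Suc: "u (Suc k) = next_bad (u k) (col k)" for k
    unfolding u_def by simp
  have u_bad: "u k \<in> B \<and> \<not> bypassed (u k)" for k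
    by (induction k) (use assms(1,2) next_bad col u_Suc in \<open>auto simp: u_def\<close>)
  show thesis
  proof
    show "u 0 = w"
      by (simp add: u_def)
    show "u k \<in> B" "\<not> bypassed (u k)" for k
      using u_bad by simp_all
    show "u (Suc k) \<in> orbit_of (cperm \<sigma> (col k)) (u k)" "u (Suc k) \<noteq> u k" for k
      using next_bad[of "u k" "col k"] u_bad col u_Suc by auto
  qed
qed

lemma not_bypassed_walk:
  assumes "2 \<le> q" "w \<in> B" "\<not> bypassed w" "1 \<le> i" "i \<le> q"
  obtains x e where "x 0 = White w" "fst (e 0) \<noteq> i"
    and "\<And>k. const_ends \<sigma> (e k) = {x k, x (Suc k)}"
    and "\<And>k. x k \<noteq> x (Suc k)" and "\<And>k. e k \<noteq> e (Suc k)"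
    and "\<And>k. x k \<in> const_verts q B \<sigma>" and "\<And>k. e k \<in> const_edges q B"
proof -
  \<comment> \<open>Alternating between colour \<open>i\<close> and another colour \<open>c'\<close> keeps consecutive edges distinct,
    and the walk leaves \<open>White w\<close> along colour \<open>c'\<close>.\<close>
  define c' where "c' = (if i = 1 then 2 else (1::nat))"
  define col where "col k = (if even k then c' else i)" for k :: nat
  have col: "1 \<le> col k" "col k \<le> q" "col (Suc k) \<noteq> col k" for k
    using assms(1,4,5) unfolding col_def c'_def by auto
  obtain u where u: "u 0 = w" "\<And>k. u k \<in> B"
    and u_step: "\<And>k. u (Suc k) \<in> orbit_of (cperm \<sigma> (col k)) (u k)" "\<And>k. u (Suc k) \<noteq> u k"
    using not_bypassed_sequence[of w col, OF assms(2,3) col(1) col(2)] by metis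
  define cyc where "cyc k = orbit_of (cperm \<sigma> (col k)) (u k)" for k
  have cyc_Suc: "orbit_of (cperm \<sigma> (col k)) (u (Suc k)) = cyc k" for k
    unfolding cyc_def using orbit_of_cperm_eq col u u_step by blast
  define x where
    "x n = (if even n then White (u (n div 2)) else ColV (col (n div 2)) (cyc (n div 2)))" for n
  define e where "e n = (col (n div 2), u ((n + 1) div 2))" for n
  have x_2: "x (2 * k) = White (u k)" "x (Suc (2 * k)) = ColV (col k) (cyc k)"
      "x (Suc (Suc (2 * k))) = White (u (Suc k))" for k
    unfolding x_def by simp_all
  have e_2: "e (2 * k) = (col k, u k)" "e (Suc (2 * k)) = (col k, u (Suc k))"
      "e (Suc (Suc (2 * k))) = (col (Suc k), u (Suc k))" for k
    unfolding e_def by simp_all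
  have by_parity: "P n" if "\<And>k. P (2 * k)" "\<And>k. P (Suc (2 * k))" for P and n :: nat
    using that by (metis dvd_mult_div_cancel even_Suc odd_Suc_minus_one)
  show thesis
  proof
    show "x 0 = White w" "fst (e 0) \<noteq> i"
      using x_2(1)[of 0] e_2(1)[of 0] u(1) unfolding col_def c'_def by simp_all
    show "const_ends \<sigma> (e n) = {x n, x (Suc n)}" for n
      by (rule by_parity[where P = "\<lambda>n. const_ends \<sigma> (e n) = {x n, x (Suc n)}"])
        (use x_2 e_2 cyc_Suc in \<open>auto simp: const_ends_def cyc_def insert_commute\<close>)
    show "x n \<noteq> x (Suc n)" for n
      by (rule by_parity[where P = "\<lambda>n. x n \<noteq> x (Suc n)"]) (simp_all add: x_2)
    show "e n \<noteq> e (Suc n)" for n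
      by (rule by_parity[where P = "\<lambda>n. e n \<noteq> e (Suc n)"])
        (simp_all add: e_2 u_step(2)[THEN not_sym] col(3)[THEN not_sym])
    show "x n \<in> const_verts q B \<sigma>" for n
      by (rule by_parity[where P = "\<lambda>n. x n \<in> const_verts q B \<sigma>"])
        (use x_2 u col in \<open>auto simp: const_verts_def cyc_def\<close>)
    show "e n \<in> const_edges q B" for n
      by (rule by_parity[where P = "\<lambda>n. e n \<in> const_edges q B"])
        (use e_2 u col in \<open>auto simp: const_edges_def\<close>)
  qed
qed

lemma bypassed_if_tree_bridge:
  assumes "2 \<le> q" "w \<in> B" "1 \<le> i" "i \<le> q"
    and bridge: "g_bridge (const_verts q B \<sigma>) (const_edges q B) (const_ends \<sigma>) (i, w)"
    and tree: "g_tree (comp_minus_verts (const_verts q B \<sigma>) (const_edges q B) (const_ends \<sigma>) (i, w) (White w))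
                  (comp_minus_edges (const_verts q B \<sigma>) (const_edges q B) (const_ends \<sigma>) (i, w) (White w))
                  (const_ends \<sigma>)"
  shows "bypassed w"
proof (rule ccontr)
  let ?Vs = "const_verts q B \<sigma>" and ?Es = "const_edges q B" and ?ends = "const_ends \<sigma>"
  let ?v = "ColV i (orbit_of (cperm \<sigma> i) w)"
  assume "\<not> bypassed w"
  then obtain x e where x0: "x 0 = White w" and e0: "fst (e 0) \<noteq> i"
    and walk: "\<And>k. ?ends (e k) = {x k, x (Suc k)}" "\<And>k. x k \<noteq> x (Suc k)" "\<And>k. e k \<noteq> e (Suc k)"
      "\<And>k. x k \<in> ?Vs" "\<And>k. e k \<in> ?Es"
    using not_bypassed_walk assms(1-4) by metis
  have ends_a: "?ends (i, w) = {x 0, ?v}"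
    unfolding const_ends_def x0 by simp
  have "\<not> g_conn ?Vs (?Es - {(i, w)}) ?ends (x 0) ?v"
  proof
    assume conn: "g_conn ?Vs (?Es - {(i, w)}) ?ends (x 0) ?v"
    obtain y z where "?ends (i, w) = {y, z}" "\<not> g_conn ?Vs (?Es - {(i, w)}) ?ends y z"
      using bridge unfolding g_bridge_def by blast
    then show False
      using conn ends_a g_conn_sym by (metis doubleton_eq_iff)
  qed
  then have "?v \<notin> comp_minus_verts ?Vs ?Es ?ends (i, w) (x 0)"
    unfolding comp_minus_verts_def by simp
  moreover have "e 0 \<noteq> (i, w)"
    using e0 by auto
  ultimately have "g_has_cycle (comp_minus_verts ?Vs ?Es ?ends (i, w) (x 0))
      (comp_minus_edges ?Vs ?Es ?ends (i, w) (x 0)) ?ends"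
    by (rule nonbacktracking_walk_component_cycle[OF finite_const_verts walk ends_a])
  then show False
    using tree x0 unfolding g_tree_def by simp
qed

lemma cyc_interval_bypassed:
  assumes "2 \<le> q" "b1 \<in> B" "1 \<le> i" "i \<le> q"
    and side: "side_tree_bridges q B \<sigma> {(i, x) | x. x \<in> cyc_interval (cperm \<sigma> i) b1 b2}"
    and x: "x \<in> cyc_interval (cperm \<sigma> i) b1 b2"
  shows "bypassed x"
proof (rule bypassed_if_tree_bridge[OF assms(1) _ assms(3,4)])
  show "x \<in> B"
    using x funpow_cperm_in_B assms(2,4) unfolding cyc_interval_def by auto
  have "(i, x) \<in> {(i, x) | x. x \<in> cyc_interval (cperm \<sigma> i) b1 b2}"
    using x by blast
  then show "g_bridge (const_verts q B \<sigma>) (const_edges q B) (const_ends \<sigma>) (i, x)"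
    and "g_tree (comp_minus_verts (const_verts q B \<sigma>) (const_edges q B) (const_ends \<sigma>) (i, x) (White x))
      (comp_minus_edges (const_verts q B \<sigma>) (const_edges q B) (const_ends \<sigma>) (i, x) (White x))
      (const_ends \<sigma>)"
    using side unfolding side_tree_bridges_def by fastforce+
qed

lemma connected_across_cyc_interval:
  assumes "b1 \<in> B" "1 \<le> i" "i \<le> q" "b2 \<in> orbit_of (cperm \<sigma> i) b1" "b1 \<noteq> b2"
    and bypassed: "\<And>x. x \<in> cyc_interval (cperm \<sigma> i) b1 b2 \<Longrightarrow> bypassed x"
  shows "(\<sigma> i b1, b2) \<in> adj_no0\<^sup>*"
proof -
  let ?L = "LEAST m. 0 < m \<and> (cperm \<sigma> i ^^ m) b1 = b2"
  obtain j where "b2 = (cperm \<sigma> i ^^ j) b1"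
    using assms(4) unfolding orbit_of_def by blast
  then have "\<exists>m. 0 < m \<and> (cperm \<sigma> i ^^ m) b1 = b2"
    using assms(5) by (metis funpow_0 gr0I)
  then have "(cperm \<sigma> i ^^ ?L) b1 = b2"
    by (rule LeastI2_ex) simp
  moreover have "(\<sigma> i b1, (cperm \<sigma> i ^^ ?L) b1) \<in> adj_no0\<^sup>*"
  proof (rule cycle_segment_connected[OF assms(1-3)])
    fix l assume "1 \<le> l" "l \<le> ?L"
    then have "(cperm \<sigma> i ^^ l) b1 \<in> cyc_interval (cperm \<sigma> i) b1 b2"
      unfolding cyc_interval_def by blast
    then show "bypassed ((cperm \<sigma> i ^^ l) b1)"
      by (rule bypassed)
  qed
  ultimately show ?thesis
    by simp
qed

section \<open>Joining the two colour-\<open>i\<close> edges\<close>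

lemma adj_no0_path:
  assumes "(x, y) \<in> adj_no0\<^sup>*" "x \<in> V"
  shows "\<exists>vs cs. path_no0 q V \<sigma> vs cs \<and> hd vs = x \<and> last vs = y"
  using assms(1)
proof (induction rule: rtrancl_induct)
  case base
  show ?case
    using path_no0_singleton[OF assms(2)] by fastforce
next
  case (step y z)
  then obtain vs cs where p: "path_no0 q V \<sigma> vs cs" "hd vs = x" "last vs = y"
    by blast
  obtain c where c: "y \<in> V" "1 \<le> c" "c \<le> q" "z = \<sigma> c y"
    using step(2) unfolding adj_no0_def by blast
  show ?case
  proof (cases "z \<in> set vs")
    case False
    have "vs \<noteq> []"
      using path_no0_length[OF p(1)] by auto
    moreover have "path_no0 q V \<sigma> (vs @ [z]) (cs @ [c])"
      using path_no0_snoc[OF p(1) False] sigma_in_V c p(3) by auto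
    ultimately show ?thesis
      using p(2) by (metis hd_append2 last_snoc)
  next
    case True
    then obtain k where k: "k < length vs" "vs ! k = z"
      by (metis in_set_conv_nth)
    then show ?thesis
      using path_no0_take[OF p(1) k(1)] p(2)
      by (metis hd_take last_snoc take_Suc_conv_app_nth zero_less_Suc)
  qed
qed

lemma pair_sigma_eq: "c \<le> q \<Longrightarrow> b \<in> V \<Longrightarrow> x \<in> {b, \<sigma> c b} \<Longrightarrow> {x, \<sigma> c x} = {b, \<sigma> c b}"
  using sigma_sigma by auto

lemma edges_of_distinct_black_disjoint:
  assumes "b1 \<in> B" "b2 \<in> B" "b1 \<noteq> b2" "c \<le> q"
  shows "{b1, \<sigma> c b1} \<inter> {b2, \<sigma> c b2} = {}"
proof -
  have "b1 \<in> V" "b2 \<in> V"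
    using assms B_subset_V by auto
  then have "\<sigma> c b1 \<notin> B" "\<sigma> c b2 \<notin> B" "\<sigma> c b1 \<noteq> \<sigma> c b2"
    using sigma_in_B_iff sigma_sigma assms by metis+
  then show ?thesis
    using assms by auto
qed

lemma path_through_two_edges:
  assumes b: "b1 \<in> B" "b2 \<in> B" "b1 \<noteq> b2" and i: "1 \<le> i" "i \<le> q"
    and conn: "(x0, y0) \<in> adj_no0\<^sup>*" "x0 \<in> {b1, \<sigma> i b1}" "y0 \<in> {b2, \<sigma> i b2}"
  shows "\<exists>vs cs. path_no0 q V \<sigma> vs cs \<and>
           (i, {b1, \<sigma> i b1}) \<in> path_edges vs cs \<and> (i, {b2, \<sigma> i b2}) \<in> path_edges vs cs"
proof -
  let ?X = "{b1, \<sigma> i b1}" and ?Y = "{b2, \<sigma> i b2}"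
  have V: "b1 \<in> V" "b2 \<in> V"
    using b B_subset_V by auto
  obtain vs0 cs0 where "path_no0 q V \<sigma> vs0 cs0" "hd vs0 \<in> ?X" "last vs0 \<in> ?Y"
    using adj_no0_path[OF conn(1)] conn(2,3) V sigma_in_V i by fastforce
  then obtain vs cs where p: "path_no0 q V \<sigma> vs cs" "hd vs \<in> ?X" "last vs \<in> ?Y"
    and inner: "set (tl vs) \<inter> ?X = {}" "set (butlast vs) \<inter> ?Y = {}"
    by (rule path_no0_shortest_between)
  let ?x = "\<sigma> i (hd vs)" and ?y = "\<sigma> i (last vs)"
  have "vs \<noteq> []"
    using path_no0_length[OF p(1)] by auto
  then have set_vs: "set vs = insert (hd vs) (set (tl vs))"
      "set vs = insert (last vs) (set (butlast vs))"
    by (cases vs, simp_all) (induction vs, auto)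
  have X: "{hd vs, ?x} = ?X" and Y: "{last vs, ?y} = ?Y"
    by (rule pair_sigma_eq[OF i(2) V(1) p(2)], rule pair_sigma_eq[OF i(2) V(2) p(3)])
  have ends_V: "hd vs \<in> V" "last vs \<in> V"
    using p(2,3) V sigma_in_V i by auto
  have "?x \<notin> set vs"
    using set_vs(1) inner(1) X sigma_neq[OF i(2) ends_V(1)] by auto
  moreover have "?y \<notin> set vs"
    using set_vs(2) inner(2) Y sigma_neq[OF i(2) ends_V(2)] by auto
  moreover have "?x \<noteq> ?y"
    using edges_of_distinct_black_disjoint[OF b i(2)] X Y by blast
  ultimately have "path_no0 q V \<sigma> (?x # vs @ [?y]) (i # cs @ [i])"
    and "path_edges (?x # vs @ [?y]) (i # cs @ [i])
      = insert (i, {?x, hd vs}) (insert (i, {last vs, ?y}) (path_edges vs cs))"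
    using path_no0_extend[OF p(1)] ends_V sigma_in_V sigma_sigma i by simp_all
  moreover have "{?x, hd vs} = ?X"
    using X by (simp add: insert_commute)
  ultimately show ?thesis
    using Y by auto
qed

end

theorem mainTheorem6:
  fixes q :: nat and V :: "'v set" and \<sigma> :: "nat \<Rightarrow> 'v \<Rightarrow> 'v" and r :: 'v and B :: "'v set"
    and i :: nat and b1 b2 :: 'v
  assumes "q \<ge> 2"
    and "rooted_bipartite_cg q V \<sigma> r B"
    and "1 \<le> i" and "i \<le> q"
    and "b1 \<in> B" and "b2 \<in> B" and "b2 \<in> orbit_of (cperm \<sigma> i) b1" and "b1 \<noteq> b2"
    and "side_tree_bridges q B \<sigma> {(i, x) | x. x \<in> cyc_interval (cperm \<sigma> i) b1 b2}
       \<or> side_tree_bridges q B \<sigma> {(i, x) | x. x \<in> cyc_interval (cperm \<sigma> i) b2 b1}"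
  shows "\<exists>vs cs. path_no0 q V \<sigma> vs cs \<and>
           (i, {b1, \<sigma> i b1}) \<in> path_edges vs cs \<and> (i, {b2, \<sigma> i b2}) \<in> path_edges vs cs"
proof -
  interpret rooted_bipartite_colored_graph q V \<sigma> r B
    using assms(2) by unfold_locales
  have connected: "(\<sigma> i x, y) \<in> adj_no0\<^sup>*"
    if "x \<in> B" "y \<in> orbit_of (cperm \<sigma> i) x" "x \<noteq> y"
      and "side_tree_bridges q B \<sigma> {(i, z) | z. z \<in> cyc_interval (cperm \<sigma> i) x y}" for x y
    using connected_across_cyc_interval[OF that(1) assms(3,4) that(2,3)]
      cyc_interval_bypassed[OF assms(1) that(1) assms(3,4) that(4)] by blast
  from assms(9) show ?thesis
  proof
    assume "side_tree_bridges q B \<sigma> {(i, x) | x. x \<in> cyc_interval (cperm \<sigma> i) b1 b2}"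
    then have "(\<sigma> i b1, b2) \<in> adj_no0\<^sup>*"
      by (rule connected[OF assms(5,7,8)])
    then show ?thesis
      using path_through_two_edges[OF assms(5,6,8,3,4)] by blast
  next
    assume side: "side_tree_bridges q B \<sigma> {(i, x) | x. x \<in> cyc_interval (cperm \<sigma> i) b2 b1}"
    have "b1 \<in> orbit_of (cperm \<sigma> i) b2"
      using orbit_of_cperm_sym assms(4,5,7) by blast
    then have "(\<sigma> i b2, b1) \<in> adj_no0\<^sup>*"
      using connected[OF assms(6) _ not_sym[OF assms(8)] side] by blast
    then have "(b1, \<sigma> i b2) \<in> adj_no0\<^sup>*"
      by (rule adj_no0_rtrancl_sym)
    then show ?thesis
      using path_through_two_edges[OF assms(5,6,8,3,4)] by blast
  qed
qed

end
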